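(* Let $G=SL_3(\mathbb{C})$ (so $\mathfrak g\cong\mathfrak{sl}_3$) and let $H\subseteq G$ be a connected algebraic subgroup whose Lie algebra is a root $\mathfrak{sl}_2$-subalgebra of $\mathfrak g$. Then for each of $X=X^{(1)}$ and $X=X^{(2)}$, the ring $\mathbb{C}[X]^H$ has positive dimension (in particular it is not $\mathbb{C}$).
   Context: A root $\mathfrak{sl}_2$-subalgebra is one of the form $\operatorname{span}\{X_\alpha,X_{-\alpha},H_\alpha\}$ for a root $\alpha$ of $\mathfrak g$ (with $X_{\pm\alpha}$ root vectors and $H_\alpha=[X_\alpha,X_{-\alpha}]$, $\alpha(H_\alpha)=2$). Fix a maximal torus and Borel subgroup of $G$, fundamental weights $\omega_1,\omega_2$, longest Weyl element $w_0$. For $k=1,2$ let $v_k$ be a highest weight vector in the irreducible representation $L(-w_0(\omega_k))$ and $X^{(k)}=G\cdot v_k$. $\mathbb{C}[X]^H$ is the ring of $H$-invariant regular functions on $X$ (for left translation). *)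

theory Defs
  imports "HOL-Analysis.Analysis" "HOL-Computational_Algebra.Polynomial"
begin

definition SL3 :: "(complex^3^3) set" where
  "SL3 = {g. det g = 1}"

definition polyfun3 :: "(complex^3 \<Rightarrow> complex) \<Rightarrow> bool" where
  "polyfun3 f \<longleftrightarrow> (\<exists>S c. finite S \<and>
     (\<forall>x. f x = (\<Sum>m\<in>S. c m * (\<Prod>i\<in>UNIV. (x $ i) ^ m i))))"

text \<open>Regular functions on a locally closed subset X of C^3 (local quotients of polynomials);
  only the values on X matter.\<close>
definition regular_on :: "(complex^3) set \<Rightarrow> (complex^3 \<Rightarrow> complex) \<Rightarrow> bool" where
  "regular_on X f \<longleftrightarrow> (\<forall>x\<in>X. \<exists>p q. polyfun3 p \<and> polyfun3 q \<and> q x \<noteq> 0 \<and>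
     (\<forall>y\<in>X. q y \<noteq> 0 \<longrightarrow> f y = p y / q y))"

definition std_act :: "complex^3^3 \<Rightarrow> complex^3 \<Rightarrow> complex^3" where
  "std_act g x = g *v x"

definition dual_act :: "complex^3^3 \<Rightarrow> complex^3 \<Rightarrow> complex^3" where
  "dual_act g phi = phi v* matrix_inv g"

text \<open>Torus = diagonal matrices, Borel = upper triangular matrices.
  L(omega_2) = wedge^2 C^3 = (C^3)^*, highest weight vector e_3^*;
  L(omega_1) = C^3, highest weight vector e_1.
  X^(1) = G.v_1 in L(-w0 omega_1) = L(omega_2), X^(2) = G.v_2 in L(-w0 omega_2) = L(omega_1).\<close>
definition X1 :: "(complex^3) set" where
  "X1 = (\<lambda>g. dual_act g (axis 2 1)) ` SL3"

definition X2 :: "(complex^3) set" where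
  "X2 = (\<lambda>g. std_act g (axis 0 1)) ` SL3"

text \<open>The connected subgroup of SL_3 with Lie algebra the root sl_2 for the root
  eps_i - eps_j (i \<noteq> j): SL_2 embedded in the (i,j) block, identity on the third coordinate.\<close>
definition root_SL2 :: "3 \<Rightarrow> 3 \<Rightarrow> (complex^3^3) set" where
  "root_SL2 i j = {g \<in> SL3. \<forall>k. k \<noteq> i \<and> k \<noteq> j \<longrightarrow>
      g $ k $ k = 1 \<and> (\<forall>l. l \<noteq> k \<longrightarrow> g $ k $ l = 0 \<and> g $ l $ k = 0)}"

definition inv_regular :: "(complex^3^3) set \<Rightarrow> (complex^3^3 \<Rightarrow> complex^3 \<Rightarrow> complex^3)
    \<Rightarrow> (complex^3) set \<Rightarrow> (complex^3 \<Rightarrow> complex) set" where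
  "inv_regular H act X = {f. regular_on X f \<and> (\<forall>h\<in>H. \<forall>y\<in>X. f (act h y) = f y)}"

text \<open>Positive (Krull) dimension of the domain C[X]^H, expressed as transcendence degree \<ge> 1:
  some element is transcendental over C (no nonzero univariate polynomial kills it on X).\<close>
definition pos_dim :: "(complex^3) set \<Rightarrow> (complex^3 \<Rightarrow> complex) set \<Rightarrow> bool" where
  "pos_dim X R \<longleftrightarrow> (\<exists>f\<in>R. \<forall>p :: complex poly. p \<noteq> 0 \<longrightarrow> (\<exists>y\<in>X. poly p (f y) \<noteq> 0))"

end

theory Submission
  imports Defs
begin

text \<open>For the root \<open>sl\<^sub>2\<close> of the root \<open>\<epsilon>\<^sub>i - \<epsilon>\<^sub>j\<close>, the subgroup \<open>H\<close> acts trivially on the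
  remaining basis vector \<open>e\<^sub>k\<close> and on the dual vector \<open>e\<^sub>k\<^sup>*\<close>. Hence on both orbits the coordinate
  \<open>y \<mapsto> y\<^sub>k\<close> is an \<open>H\<close>-invariant regular function. Since \<open>SL\<^sub>3\<close> can place any nonzero number at any
  matrix position, this coordinate takes every nonzero value on \<open>X\<close>, so no nonzero polynomial
  annihilates it: it is transcendental over \<open>\<complex>\<close>.\<close>

lemma polyfun3_coordinate: "polyfun3 (\<lambda>x. x $ k)"
  unfolding polyfun3_def
proof (intro exI conjI allI)
  let ?m = "\<lambda>l. if l = k then 1 else 0 :: nat"
  fix x :: "complex^3"
  have "(\<Prod>i\<in>UNIV. (x $ i) ^ ?m i) = (\<Prod>i\<in>UNIV. if i = k then x $ i else 1)"
    by (rule prod.cong) auto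
  then show "x $ k = (\<Sum>m\<in>{?m}. (\<lambda>_. 1) m * (\<Prod>i\<in>UNIV. (x $ i) ^ m i))"
    by simp
qed simp

lemma polyfun3_one: "polyfun3 (\<lambda>x. 1)"
  unfolding polyfun3_def by (intro exI[of _ "{\<lambda>_. 0}"] exI[of _ "\<lambda>_. 1"]) simp

lemma regular_on_polyfun3: "polyfun3 p \<Longrightarrow> regular_on X p"
  unfolding regular_on_def using polyfun3_one by fastforce

lemma pos_dim_if_takes_nonzero_values:
  assumes "f \<in> R" and hits: "\<And>c. c \<noteq> 0 \<Longrightarrow> \<exists>y\<in>X. f y = c"
  shows "pos_dim X R"
  unfolding pos_dim_def
proof (intro bexI[OF _ \<open>f \<in> R\<close>] allI impI)
  fix p :: "complex poly"
  assume "p \<noteq> 0"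
  then have "finite (insert 0 {c. poly p c = 0})"
    by (simp add: poly_roots_finite)
  then obtain c where "c \<notin> insert 0 {c. poly p c = 0}"
    using ex_new_if_finite[OF infinite_UNIV_char_0] by blast
  with hits show "\<exists>y\<in>X. poly p (f y) \<noteq> 0" by force
qed

lemma matrix_inv_mult:
  fixes A :: "'a::semiring_1^'n^'n"
  assumes "invertible A"
  shows "A ** matrix_inv A = mat 1" "matrix_inv A ** A = mat 1"
  using someI_ex[OF assms[unfolded invertible_def]] unfolding matrix_inv_def by auto

lemma matrix_inv_unique:
  fixes A B :: "'a::semiring_1^'n^'n"
  assumes "A ** B = mat 1" "B ** A = mat 1"
  shows "matrix_inv A = B"
proof -
  have "invertible A" using assms unfolding invertible_def by blast
  have "matrix_inv A = matrix_inv A ** (A ** B)" by (simp add: assms(1))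
  also have "\<dots> = (matrix_inv A ** A) ** B" by (simp add: matrix_mul_assoc)
  also have "\<dots> = B" by (simp add: matrix_inv_mult \<open>invertible A\<close>)
  finally show ?thesis .
qed

lemma matrix_vector_mult_nth_fixed:
  fixes M :: "'a::semiring_1^'n^'n"
  assumes "\<And>l. M $ k $ l = (if l = k then 1 else 0)"
  shows "(M *v y) $ k = y $ k"
  by (simp add: matrix_vector_mult_def assms if_distrib[of "\<lambda>a. a * _"] cong: if_cong)

lemma vector_matrix_mult_nth_fixed:
  fixes M :: "'a::semiring_1^'n^'n"
  assumes "\<And>l. M $ l $ k = (if l = k then 1 else 0)"
  shows "(y v* M) $ k = y $ k"
  by (simp add: vector_matrix_mult_def assms if_distrib[of "\<lambda>a. _ * a"] cong: if_cong)

lemma matrix_matrix_mult_row: "(A ** B) $ l = A $ l v* B"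
  by (simp add: matrix_matrix_mult_def vector_matrix_mult_def vec_eq_iff)

lemma matrix_inv_column_fixed:
  fixes M :: "'a::semiring_1^'n^'n"
  assumes "invertible M" "\<And>l. M $ l $ k = (if l = k then 1 else 0)"
  shows "matrix_inv M $ l $ k = (if l = k then 1 else 0)"
proof -
  have "matrix_inv M $ l $ k = (matrix_inv M $ l v* M) $ k"
    using vector_matrix_mult_nth_fixed[OF assms(2)] by simp
  also have "\<dots> = mat 1 $ l $ k"
    by (metis matrix_inv_mult(2)[OF assms(1)] matrix_matrix_mult_row)
  finally show ?thesis by (simp add: mat_def)
qed

lemma invertible_if_SL3: "g \<in> SL3 \<Longrightarrow> invertible g"
  by (simp add: SL3_def invertible_det_nz)

lemma matrix_inv_SL3:
  assumes "g \<in> SL3"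
  shows "matrix_inv g \<in> SL3" "matrix_inv (matrix_inv g) = g"
proof -
  have "det g * det (matrix_inv g) = 1"
    by (metis det_mul det_I matrix_inv_mult(1) invertible_if_SL3[OF assms])
  then show "matrix_inv g \<in> SL3" using assms by (simp add: SL3_def)
  show "matrix_inv (matrix_inv g) = g"
    by (intro matrix_inv_unique matrix_inv_mult invertible_if_SL3 assms)
qed

text \<open>Witnesses: a transvection \<open>1 + c E\<^sub>a\<^sub>b\<close> off the diagonal, a diagonal matrix
  \<open>diag(c, c\<^sup>-\<^sup>1)\<close> in positions \<open>a, a + 1\<close> on it.\<close>
lemma SL3_entry_arbitrary:
  fixes a b :: 3 and c :: complex
  assumes "c \<noteq> 0"
  obtains g where "g \<in> SL3" "g $ a $ b = c"
proof (cases "a = b")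
  case False
  let ?g = "\<chi> r s. if r = s then 1 else if r = a \<and> s = b then c else 0"
  have "det ?g = 1"
    using False exhaust_3[of a] exhaust_3[of b] by (elim disjE) (simp_all add: det_3)
  with False that show ?thesis by (simp add: SL3_def)
next
  case True
  let ?g = "\<chi> r s. if r = s then if r = a then c else if r = a + 1 then inverse c else 1
                    else 0"
  have "det ?g = 1"
    using assms exhaust_3[of a] by (elim disjE) (simp_all add: det_3)
  with True that show ?thesis by (simp add: SL3_def)
qed

lemma root_SL2_fixes_other_axis:
  assumes "h \<in> root_SL2 i j" "k \<noteq> i" "k \<noteq> j"
  shows "h $ k $ l = (if l = k then 1 else 0)" "h $ l $ k = (if l = k then 1 else 0)"
  using assms unfolding root_SL2_def by auto

lemma std_act_root_SL2_nth:
  assumes "h \<in> root_SL2 i j" "k \<noteq> i" "k \<noteq> j"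
  shows "std_act h y $ k = y $ k"
  unfolding std_act_def
  by (rule matrix_vector_mult_nth_fixed) (rule root_SL2_fixes_other_axis[OF assms])

lemma dual_act_root_SL2_nth:
  assumes "h \<in> root_SL2 i j" "k \<noteq> i" "k \<noteq> j"
  shows "dual_act h y $ k = y $ k"
proof -
  have "invertible h" using assms(1) by (simp add: root_SL2_def invertible_if_SL3)
  then show ?thesis
    unfolding dual_act_def
    by (intro vector_matrix_mult_nth_fixed matrix_inv_column_fixed
        root_SL2_fixes_other_axis[OF assms])
qed

lemma X1_nth_takes_nonzero_values:
  assumes "c \<noteq> 0"
  shows "\<exists>y\<in>X1. y $ k = c"
proof -
  obtain h where h: "h \<in> SL3" "h $ 2 $ k = c"
    using SL3_entry_arbitrary[OF assms] .
  have "dual_act (matrix_inv h) (axis 2 1) $ k = c"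
    using h by (simp add: dual_act_def matrix_inv_SL3 vector_matrix_mult_def axis_def
        if_distrib[of "\<lambda>a. a * _"] cong: if_cong)
  moreover have "dual_act (matrix_inv h) (axis 2 1) \<in> X1"
    unfolding X1_def using matrix_inv_SL3(1)[OF h(1)] by blast
  ultimately show ?thesis by blast
qed

lemma X2_nth_takes_nonzero_values:
  assumes "c \<noteq> 0"
  shows "\<exists>y\<in>X2. y $ k = c"
proof -
  obtain g where g: "g \<in> SL3" "g $ k $ 0 = c"
    using SL3_entry_arbitrary[OF assms] .
  have "std_act g (axis 0 1) $ k = c"
    using g by (simp add: std_act_def matrix_vector_mult_def axis_def if_distrib cong: if_cong)
  moreover have "std_act g (axis 0 1) \<in> X2"
    unfolding X2_def using g(1) by blast
  ultimately show ?thesis by blast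
qed

theorem lemma3p11:
  fixes i j :: 3
  assumes "i \<noteq> j"
  shows "pos_dim X1 (inv_regular (root_SL2 i j) dual_act X1)
       \<and> pos_dim X2 (inv_regular (root_SL2 i j) std_act X2)"
proof -
  have "\<exists>k::3. k \<noteq> i \<and> k \<noteq> j"
    using exhaust_3[of i] exhaust_3[of j]
    by (elim disjE) (auto intro: exI[of _ 1] exI[of _ 2] exI[of _ 3])
  then obtain k :: 3 where k: "k \<noteq> i" "k \<noteq> j" by blast
  have "(\<lambda>y. y $ k) \<in> inv_regular (root_SL2 i j) dual_act X1"
    unfolding inv_regular_def
    using regular_on_polyfun3[OF polyfun3_coordinate] dual_act_root_SL2_nth[OF _ k] by blast
  moreover have "(\<lambda>y. y $ k) \<in> inv_regular (root_SL2 i j) std_act X2"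
    unfolding inv_regular_def
    using regular_on_polyfun3[OF polyfun3_coordinate] std_act_root_SL2_nth[OF _ k] by blast
  ultimately show ?thesis
    by (blast intro: pos_dim_if_takes_nonzero_values
        X1_nth_takes_nonzero_values X2_nth_takes_nonzero_values)
qed

end
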